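(* Let $\Pi=((p_1,\dots,p_n),(P_1,\dots,P_n),(d_1,\dots,d_n))$ be an $n$-pod. (1) Suppose $\beta\in B_\Pi$ is an inversion (respectively similarity) bond of $\Pi$, with left and right vectors $L,R\in S^2$. Put $q_i=\pi_L(p_i)$ and $Q_i=\pi_R(P_i)$. Then there is an inversion (respectively similarity) from $L^\perp$ to $R^\perp$ mapping $q_i$ to $Q_i$ for all $i=1,\dots,n$. (2) Conversely, suppose $L,R\in S^2$ are such that there is an inversion (respectively similarity) from $L^\perp$ to $R^\perp$ mapping $\pi_L(p_i)$ to $\pi_R(P_i)$ for all $i$. Then $\Pi$ has an inversion (respectively similarity) bond with left vector $L$ and right vector $R$.
   Context: An $n$-pod is a triple $\Pi=((p_1,\dots,p_n),(P_1,\dots,P_n),(d_1,\dots,d_n))$ with platform points $p_i\in\mathbb{R}^3$, base points $P_i\in\mathbb{R}^3$ and leg lengths $d_i\ge 0$. Write a direct isometry as $v\mapsto Mv+y$ ($M\in SO(3)$) and put $x=-M^ty$, $r=\langle y,y\rangle$. It corresponds to the point $(h:M:x:y:r)=(1:m_{11}:\dots:m_{33}:x_1:x_2:x_3:y_1:y_2:y_3:r)\in\mathbb{P}^{16}_{\mathbb{C}}$. $X$ is the complex Zariski closure of the set of these points. Throughout, $\langle u,u'\rangle=u^tu'$ is the complex bilinear form on $\mathbb{C}^3$. For each $i$, let $l_i$ be the linear form $$-d_i^2h+(\langle p_i,p_i\rangle+\langle P_i,P_i\rangle)h+r-2\langle p_i,x\rangle-2\langle y,P_i\rangle-2\langle Mp_i,P_i\rangle.$$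 At $h=1$ its vanishing means $\|Mp_i+y-P_i\|^2=d_i^2$. Define: - $K_\Pi=X\cap\{l_1=\dots=l_n=0\}$; - $B=X\cap\{h=0\}$, the boundary; - the set of bonds $B_\Pi=K_\Pi\cap B$. A point $\beta=(0:M:x:y:r)\in B$ has $M$ of rank at most $1$; put $N=rM+2yx^t$. It is an inversion point if $M\neq0$ and $N\neq0$, and a similarity point if $M=0$, $x\ne0$ and $y\ne0$. An inversion (similarity) bond is a bond that is an inversion (similarity) point. Left and right vectors. For a nonzero isotropic $u=(\alpha,\beta',\gamma)\in\mathbb{C}^3$ (i.e. $\langle u,u\rangle=0$), define $S(u)\in S^2$ in two steps. - First map $u$ to $\mathbb{P}^1_{\mathbb{C}}$: send it to $(\alpha-i\beta':\gamma)$ if $(i\alpha+\beta',\gamma)\ne(0,0)$, and to $(\gamma:-\alpha-i\beta')$ otherwise. - Then apply $(0:1)\mapsto(0,0,1)$ and $(1:a+ib)\mapsto\frac{1}{a^2+b^2+1}(2a,2b,a^2+b^2-1)$. For an inversion point, write $M=vw^t$ with $v,w$ nonzero isotropic; then $L=S(w)$ and $R=S(v)$. For a similarity point, $L=S(x)$ and $R=S(y)$. Projections and maps between planes. - For $\varepsilon\in S^2$, $\pi_\varepsilon:\mathbb{R}^3\to\varepsilon^\perp$ is the orthogonal projection onto the plane through the origin orthogonal to $\varepsilon$. - Identify $\varepsilon^\perp$ with $\mathbb{C}$ via $p\mapsto\langle p,u_1\rangle+i\langle p,u_2\rangle$, where $(u_1,u_2)$ is an orthonormal basis of $\varepsilon^\perp$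 with $u_1\times u_2=-\varepsilon$. This identification is well defined up to multiplication by a unit complex number. - An inversion from $L^\perp$ to $R^\perp$ is a map which, in these coordinates, has the form $z\mapsto\frac{\alpha}{z-z_0}+w_0$ with $\alpha\in\mathbb{C}^*$ (defined for $z\ne z_0$). - A similarity from $L^\perp$ to $R^\perp$ has the form $z\mapsto\alpha z+\gamma$ with $\alpha\in\mathbb{C}^*$. *)

theory Defs
  imports "HOL-Analysis.Analysis"
begin

definition cbil :: "complex^3 \<Rightarrow> complex^3 \<Rightarrow> complex" where
  "cbil u u' = (\<Sum>k\<in>UNIV. u$k * u'$k)"

definition cvec :: "real^3 \<Rightarrow> complex^3" where
  "cvec p = (\<chi> k. complex_of_real (p$k))"

definition cmat :: "real^3^3 \<Rightarrow> complex^3^3" where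
  "cmat M = (\<chi> i j. complex_of_real (M$i$j))"

definition isotropic :: "complex^3 \<Rightarrow> bool" where
  "isotropic u \<longleftrightarrow> cbil u u = 0"

definition outer :: "complex^3 \<Rightarrow> complex^3 \<Rightarrow> complex^3^3" where
  "outer v w = (\<chi> i j. v$i * w$j)"

definition SO3 :: "(real^3^3) set" where
  "SO3 = {M. transpose M ** M = mat 1 \<and> det M = 1}"

text \<open>A vector (h, M, x, y, r) of C^17; points of P^16 are represented by
  nonzero such vectors; all notions below are invariant under nonzero scaling.\<close>
type_synonym pt = "complex \<times> (complex^3^3) \<times> (complex^3) \<times> (complex^3) \<times> complex"

definition ph :: "pt \<Rightarrow> complex" where "ph v = fst v"
definition pM :: "pt \<Rightarrow> complex^3^3" where "pM v = fst (snd v)"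
definition px :: "pt \<Rightarrow> complex^3" where "px v = fst (snd (snd v))"
definition py :: "pt \<Rightarrow> complex^3" where "py v = fst (snd (snd (snd v)))"
definition pr :: "pt \<Rightarrow> complex" where "pr v = snd (snd (snd (snd v)))"

definition scale_pt :: "complex \<Rightarrow> pt \<Rightarrow> pt" where
  "scale_pt t v = (t * ph v, (\<chi> i j. t * pM v $ i $ j), (\<chi> i. t * px v $ i),
                   (\<chi> i. t * py v $ i), t * pr v)"

text \<open>The point (1:M:x:y:r) of the direct isometry v \<mapsto> Mv + y.\<close>
definition iso_pt :: "real^3^3 \<Rightarrow> real^3 \<Rightarrow> pt" where
  "iso_pt M y = (1, cmat M, cvec (- (transpose M *v y)), cvec y, complex_of_real (y \<bullet> y))"

text \<open>Polynomial functions on C^17 (over the infinite field C these are exactly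
  the polynomials in the 17 coordinates).\<close>
inductive_set polyfun :: "(pt \<Rightarrow> complex) set" where
  const: "(\<lambda>_. c) \<in> polyfun"
| coord_h: "ph \<in> polyfun"
| coord_M: "(\<lambda>v. pM v $ i $ j) \<in> polyfun"
| coord_x: "(\<lambda>v. px v $ i) \<in> polyfun"
| coord_y: "(\<lambda>v. py v $ i) \<in> polyfun"
| coord_r: "pr \<in> polyfun"
| add: "f \<in> polyfun \<Longrightarrow> g \<in> polyfun \<Longrightarrow> (\<lambda>v. f v + g v) \<in> polyfun"
| mult: "f \<in> polyfun \<Longrightarrow> g \<in> polyfun \<Longrightarrow> (\<lambda>v. f v * g v) \<in> polyfun"

definition zariski_closure :: "pt set \<Rightarrow> pt set" where
  "zariski_closure S = {v. \<forall>f\<in>polyfun. (\<forall>s\<in>S. f s = 0) \<longrightarrow> f v = 0}"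

text \<open>Affine cone over X: the Zariski closure (in C^17) of the cone over the
  points of direct isometries. A nonzero vector v represents a point of the
  projective closure X iff v lies in this cone.\<close>
definition X_cone :: "pt set" where
  "X_cone = zariski_closure {scale_pt t (iso_pt M y) | t M y. M \<in> SO3}"

definition inX :: "pt \<Rightarrow> bool" where
  "inX v \<longleftrightarrow> v \<noteq> 0 \<and> v \<in> X_cone"

text \<open>n-pod: platform points p i, base points P i, leg lengths d i, for i < n.\<close>
definition lform :: "real^3 \<Rightarrow> real^3 \<Rightarrow> real \<Rightarrow> pt \<Rightarrow> complex" where
  "lform p P d v =
     - complex_of_real (d^2) * ph v
     + (cbil (cvec p) (cvec p) + cbil (cvec P) (cvec P)) * ph v + pr v
     - 2 * cbil (cvec p) (px v) - 2 * cbil (py v) (cvec P)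
     - 2 * cbil (pM v *v cvec p) (cvec P)"

definition in_boundary :: "pt \<Rightarrow> bool" where
  "in_boundary v \<longleftrightarrow> inX v \<and> ph v = 0"

definition is_bond :: "nat \<Rightarrow> (nat \<Rightarrow> real^3) \<Rightarrow> (nat \<Rightarrow> real^3) \<Rightarrow> (nat \<Rightarrow> real)
                        \<Rightarrow> pt \<Rightarrow> bool" where
  "is_bond n p P d v \<longleftrightarrow> in_boundary v \<and> (\<forall>i<n. lform (p i) (P i) (d i) v = 0)"

definition Nmat :: "pt \<Rightarrow> complex^3^3" where
  "Nmat v = (\<chi> a b. pr v * pM v $ a $ b + 2 * py v $ a * px v $ b)"

definition inversion_point :: "pt \<Rightarrow> bool" where
  "inversion_point v \<longleftrightarrow> in_boundary v \<and> pM v \<noteq> 0 \<and> Nmat v \<noteq> 0"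

definition similarity_point :: "pt \<Rightarrow> bool" where
  "similarity_point v \<longleftrightarrow> in_boundary v \<and> pM v = 0 \<and> px v \<noteq> 0 \<and> py v \<noteq> 0"

definition S2 :: "(real^3) set" where
  "S2 = {e. norm e = 1}"

definition P1_to_S2 :: "complex \<times> complex \<Rightarrow> real^3" where
  "P1_to_S2 c = (if fst c = 0 then vector [0, 0, 1]
     else (let z = snd c / fst c; a = Re z; b = Im z in
           (1 / (a^2 + b^2 + 1)) *\<^sub>R vector [2*a, 2*b, a^2 + b^2 - 1]))"

definition Smap :: "complex^3 \<Rightarrow> real^3" where
  "Smap u = (let \<alpha> = u$1; \<beta> = u$2; \<gamma> = u$3 in
     P1_to_S2 (if (\<i>*\<alpha> + \<beta>, \<gamma>) \<noteq> (0, 0) then (\<alpha> - \<i>*\<beta>, \<gamma>) else (\<gamma>, -\<alpha> - \<i>*\<beta>)))"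

definition inv_LR :: "pt \<Rightarrow> real^3 \<Rightarrow> real^3 \<Rightarrow> complex^3 \<Rightarrow> complex^3 \<Rightarrow> bool" where
  "inv_LR \<beta> L R v w \<longleftrightarrow> v \<noteq> 0 \<and> w \<noteq> 0 \<and> isotropic v \<and> isotropic w \<and>
      pM \<beta> = outer v w \<and> L = Smap w \<and> R = Smap v"

definition sim_L :: "pt \<Rightarrow> real^3" where "sim_L \<beta> = Smap (px \<beta>)"
definition sim_R :: "pt \<Rightarrow> real^3" where "sim_R \<beta> = Smap (py \<beta>)"

definition proj :: "real^3 \<Rightarrow> real^3 \<Rightarrow> real^3" where
  "proj \<epsilon> p = p - (p \<bullet> \<epsilon>) *\<^sub>R \<epsilon>"

definition adapted_basis :: "real^3 \<Rightarrow> real^3 \<Rightarrow> real^3 \<Rightarrow> bool" where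
  "adapted_basis \<epsilon> u1 u2 \<longleftrightarrow> norm u1 = 1 \<and> norm u2 = 1 \<and> u1 \<bullet> u2 = 0 \<and>
     u1 \<bullet> \<epsilon> = 0 \<and> u2 \<bullet> \<epsilon> = 0 \<and> cross3 u1 u2 = - \<epsilon>"

definition plane_coord :: "real^3 \<Rightarrow> real^3 \<Rightarrow> real^3 \<Rightarrow> complex" where
  "plane_coord u1 u2 p = Complex (p \<bullet> u1) (p \<bullet> u2)"

text \<open>The identification with C is only defined up to a unit complex factor, under
  which the class of inversions is invariant; we quantify existentially over it.\<close>
definition has_inversion :: "real^3 \<Rightarrow> real^3 \<Rightarrow> nat \<Rightarrow> (nat \<Rightarrow> real^3) \<Rightarrow> (nat \<Rightarrow> real^3) \<Rightarrow> bool" where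
  "has_inversion L R n q Q \<longleftrightarrow>
     (\<exists>u1 u2 U1 U2 (\<alpha>::complex) z0 w0. adapted_basis L u1 u2 \<and> adapted_basis R U1 U2 \<and> \<alpha> \<noteq> 0 \<and>
        (\<forall>i<n. plane_coord u1 u2 (q i) \<noteq> z0 \<and>
               \<alpha> / (plane_coord u1 u2 (q i) - z0) + w0 = plane_coord U1 U2 (Q i)))"

definition has_similarity :: "real^3 \<Rightarrow> real^3 \<Rightarrow> nat \<Rightarrow> (nat \<Rightarrow> real^3) \<Rightarrow> (nat \<Rightarrow> real^3) \<Rightarrow> bool" where
  "has_similarity L R n q Q \<longleftrightarrow>
     (\<exists>u1 u2 U1 U2 (\<alpha>::complex) \<gamma>. adapted_basis L u1 u2 \<and> adapted_basis R U1 U2 \<and> \<alpha> \<noteq> 0 \<and>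
        (\<forall>i<n. \<alpha> * plane_coord u1 u2 (q i) + \<gamma> = plane_coord U1 U2 (Q i)))"

end

theory Submission
  imports Defs
begin

text \<open>At infinity (h = 0) the equations h y + M x = 0, h x + M^t y = 0,
  \<langle>x,x\<rangle> = h r and \<langle>y,y\<rangle> = h r of X force, for M = v w^t with isotropic v, w,
  that x is a multiple a w and y a multiple b v.  Writing an isotropic vector as
  u1 + i u2 with (u1, u2) orthonormal, \<langle>p, u1 + i u2\<rangle> is the complex coordinate of the
  projection of p to the plane orthogonal to u1 \<times> u2, and S(u1 + i u2) = -u1 \<times> u2.
  So each leg equation becomes (z + b)(Z + a) = r/2 + a b in these coordinates:
  a Moebius relation between the projected platform and base points, or, if M = 0,
  an affine one.

  Conversely the standard boundary points (with left and right vectors the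
  poles) are limits of explicit polynomial curves of (scaled) isometries: a
  polynomial curve meeting the Zariski closure in infinitely many parameters lies
  in it entirely.  Multiplying M from the left and the right by rotations
  preserves X and moves the standard points to arbitrary left and right vectors.\<close>

section \<open>Zariski closure and polynomial curves\<close>

definition cpoly_fun :: "(complex \<Rightarrow> complex) \<Rightarrow> bool" where
  "cpoly_fun g \<longleftrightarrow> (\<exists>q. \<forall>z. g z = poly q z)"

lemma cpoly_fun_const: "cpoly_fun (\<lambda>z. c)"
  unfolding cpoly_fun_def by (rule exI[of _ "[:c:]"]) simp

lemma cpoly_fun_id: "cpoly_fun (\<lambda>z. z)"
  unfolding cpoly_fun_def by (rule exI[of _ "[:0,1:]"]) simp

lemma cpoly_fun_add: "cpoly_fun f \<Longrightarrow> cpoly_fun g \<Longrightarrow> cpoly_fun (\<lambda>z. f z + g z)"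
  unfolding cpoly_fun_def by (metis poly_add)

lemma cpoly_fun_mult: "cpoly_fun f \<Longrightarrow> cpoly_fun g \<Longrightarrow> cpoly_fun (\<lambda>z. f z * g z)"
  unfolding cpoly_fun_def by (metis poly_mult)

lemma cpoly_fun_minus: "cpoly_fun f \<Longrightarrow> cpoly_fun (\<lambda>z. - f z)"
  unfolding cpoly_fun_def by (metis poly_minus)

lemma cpoly_fun_diff: "cpoly_fun f \<Longrightarrow> cpoly_fun g \<Longrightarrow> cpoly_fun (\<lambda>z. f z - g z)"
  unfolding cpoly_fun_def by (metis poly_diff)

lemma cpoly_fun_power: "cpoly_fun f \<Longrightarrow> cpoly_fun (\<lambda>z. f z ^ n)"
  by (induction n) (auto intro: cpoly_fun_const cpoly_fun_mult)

lemma cpoly_fun_divide_const: "cpoly_fun f \<Longrightarrow> cpoly_fun (\<lambda>z. f z / c)"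
  using cpoly_fun_mult[of f "\<lambda>z. inverse c"] by (simp add: divide_inverse cpoly_fun_const)

lemmas cpoly_fun_intros = cpoly_fun_const cpoly_fun_id cpoly_fun_add cpoly_fun_mult cpoly_fun_minus
  cpoly_fun_diff cpoly_fun_power cpoly_fun_divide_const

definition poly_curve :: "(complex \<Rightarrow> pt) \<Rightarrow> bool" where
  "poly_curve \<gamma> \<longleftrightarrow> cpoly_fun (\<lambda>z. ph (\<gamma> z)) \<and> (\<forall>i j. cpoly_fun (\<lambda>z. pM (\<gamma> z) $ i $ j))
     \<and> (\<forall>i. cpoly_fun (\<lambda>z. px (\<gamma> z) $ i)) \<and> (\<forall>i. cpoly_fun (\<lambda>z. py (\<gamma> z) $ i))
     \<and> cpoly_fun (\<lambda>z. pr (\<gamma> z))"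

definition poly_map :: "(pt \<Rightarrow> pt) \<Rightarrow> bool" where
  "poly_map \<Phi> \<longleftrightarrow> (\<lambda>v. ph (\<Phi> v)) \<in> polyfun \<and> (\<forall>i j. (\<lambda>v. pM (\<Phi> v) $ i $ j) \<in> polyfun)
     \<and> (\<forall>i. (\<lambda>v. px (\<Phi> v) $ i) \<in> polyfun) \<and> (\<forall>i. (\<lambda>v. py (\<Phi> v) $ i) \<in> polyfun)
     \<and> (\<lambda>v. pr (\<Phi> v)) \<in> polyfun"

lemmas polyfun_coords = polyfun.coord_h[unfolded ph_def] polyfun.coord_M[unfolded pM_def]
  polyfun.coord_x[unfolded px_def] polyfun.coord_y[unfolded py_def] polyfun.coord_r[unfolded pr_def]

lemma polyfun_comp_poly_curve:
  assumes "f \<in> polyfun" "poly_curve \<gamma>"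
  shows "cpoly_fun (\<lambda>z. f (\<gamma> z))"
  using assms by (induction rule: polyfun.induct)
    (auto simp: poly_curve_def intro: cpoly_fun_const cpoly_fun_add cpoly_fun_mult)

lemma polyfun_comp_poly_map:
  assumes "f \<in> polyfun" "poly_map \<Phi>"
  shows "(\<lambda>v. f (\<Phi> v)) \<in> polyfun"
  using assms by (induction rule: polyfun.induct) (auto simp: poly_map_def intro: polyfun.intros)

lemma zariski_closure_vanish:
  "v \<in> zariski_closure S \<Longrightarrow> f \<in> polyfun \<Longrightarrow> (\<forall>s\<in>S. f s = 0) \<Longrightarrow> f v = 0"
  unfolding zariski_closure_def by blast

lemma subset_zariski_closure: "S \<subseteq> zariski_closure S"
  unfolding zariski_closure_def by blast

lemma poly_curve_zariski_closure:
  assumes "poly_curve \<gamma>" "infinite T" "\<forall>z\<in>T. \<gamma> z \<in> zariski_closure S"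
  shows "\<gamma> z0 \<in> zariski_closure S"
  unfolding zariski_closure_def
proof (intro CollectI ballI impI)
  fix f assume f: "f \<in> polyfun" and van: "\<forall>s\<in>S. f s = 0"
  obtain q where q: "\<forall>z. f (\<gamma> z) = poly q z"
    using polyfun_comp_poly_curve[OF f assms(1)] unfolding cpoly_fun_def by blast
  have "f (\<gamma> z) = 0" if "z \<in> T" for z
    using that assms(3) zariski_closure_vanish[OF _ f van] by blast
  hence "T \<subseteq> {z. poly q z = 0}" using q by auto
  hence "q = 0" using assms(2) poly_roots_finite finite_subset by blast
  thus "f (\<gamma> z0) = 0" using q by simp
qed

lemma poly_map_zariski_closure:
  assumes "poly_map \<Phi>" "\<forall>s\<in>S. \<Phi> s \<in> zariski_closure S" "q \<in> zariski_closure S"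
  shows "\<Phi> q \<in> zariski_closure S"
  unfolding zariski_closure_def
proof (intro CollectI ballI impI)
  fix f assume f: "f \<in> polyfun" and van: "\<forall>s\<in>S. f s = 0"
  have "\<forall>s\<in>S. f (\<Phi> s) = 0" using assms(2) zariski_closure_vanish[OF _ f van] by blast
  thus "f (\<Phi> q) = 0"
    using zariski_closure_vanish[OF assms(3) polyfun_comp_poly_map[OF f assms(1)]] by blast
qed

lemma infinite_nonzero_complex: "infinite (UNIV - {0::complex})"
  by (simp add: infinite_UNIV_char_0)

lemma cvec_add: "cvec (a + b) = cvec a + cvec b"
  by (simp add: cvec_def vec_eq_iff)

lemma cvec_minus: "cvec (- a) = - cvec a"
  by (simp add: cvec_def vec_eq_iff)

lemma cvec_diff: "cvec (a - b) = cvec a - cvec b"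
  by (simp add: cvec_def vec_eq_iff)

lemma cvec_scaleR: "cvec (r *\<^sub>R a) = complex_of_real r *s cvec a"
  by (simp add: cvec_def vec_eq_iff)

lemma cvec_zero [simp]: "cvec 0 = 0"
  by (simp add: cvec_def vec_eq_iff)

lemma cvec_matrix_vector_mult: "cvec (M *v a) = cmat M *v cvec a"
  by (simp add: cvec_def cmat_def vec_eq_iff matrix_vector_mult_def)

lemma cvec_vector_matrix_mult: "cvec (a v* M) = cvec a v* cmat M"
  by (simp add: cvec_def cmat_def vec_eq_iff vector_matrix_mult_def)

lemma cmat_transpose: "cmat (transpose M) = transpose (cmat M)"
  by (simp add: cmat_def transpose_def vec_eq_iff)

lemma cmat_matrix_mult: "cmat (A ** B) = cmat A ** cmat B"
  by (simp add: cmat_def vec_eq_iff matrix_matrix_mult_def)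

lemma cbil_cvec: "cbil (cvec a) (cvec b) = complex_of_real (a \<bullet> b)"
  by (simp add: cbil_def cvec_def inner_vec_def)

lemma cbil_commute: "cbil a b = cbil b a"
  by (simp add: cbil_def mult.commute)

lemma cbil_scale_left: "cbil (k *s a) c = k * cbil a c"
  by (simp add: cbil_def sum_distrib_left algebra_simps)

lemma cbil_scale_right: "cbil c (k *s a) = k * cbil c a"
  by (simp add: cbil_def sum_distrib_left algebra_simps)

lemma cbil_minus_left: "cbil (- a) c = - cbil a c"
  by (simp add: cbil_def sum_negf)

lemma cbil_minus_right: "cbil c (- a) = - cbil c a"
  by (simp add: cbil_def sum_negf)

lemma orthogonal_matrix_inner: "orthogonal_matrix M \<Longrightarrow> (M *v d) \<bullet> (M *v d) = d \<bullet> (d::real^'n)"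
  by (metis dot_matrix_product dot_matrix_vector_mul matrix_mul_lid orthogonal_matrix_def)

lemma SO3_iff_rotation_matrix: "M \<in> SO3 \<longleftrightarrow> rotation_matrix M"
  by (simp add: SO3_def rotation_matrix_def orthogonal_matrix)

lemma SO3_orthogonal_matrix: "M \<in> SO3 \<Longrightarrow> orthogonal_matrix M"
  by (simp add: SO3_iff_rotation_matrix rotation_matrix_def)

lemma SO3_mult: "A \<in> SO3 \<Longrightarrow> B \<in> SO3 \<Longrightarrow> A ** B \<in> SO3"
  by (simp add: SO3_iff_rotation_matrix rotation_matrix_def orthogonal_matrix_mul det_mul)

lemma SO3_transpose: "M \<in> SO3 \<Longrightarrow> transpose M \<in> SO3"
  by (simp add: SO3_iff_rotation_matrix rotation_matrix_def det_transpose)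

lemma matrix_vector_mult_smult: "A *v (c *s v) = c *s (A *v v)" for A :: "complex^3^3"
  by (simp add: vec_eq_iff matrix_vector_mult_def sum_distrib_left algebra_simps)

lemma smult_matrix_vector_mult: "(\<chi> i j. t * A $ i $ j) *v v = t *s (A *v v)" for A :: "complex^3^3"
  by (simp add: vec_eq_iff matrix_vector_mult_def sum_distrib_left algebra_simps)

lemma smult_transpose_matrix_vector_mult:
  "transpose (\<chi> i j. t * A $ i $ j) *v v = t *s (transpose A *v v)" for A :: "complex^3^3"
  by (simp add: vec_eq_iff matrix_vector_mult_def transpose_def sum_distrib_left algebra_simps)

lemma outer_matrix_vector_mult: "outer v w *v x = cbil w x *s v"
  by (simp add: outer_def cbil_def vec_eq_iff matrix_vector_mult_def sum_distrib_left algebra_simps)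

lemma transpose_outer_matrix_vector_mult: "transpose (outer v w) *v y = cbil v y *s w"
  by (simp add: outer_def cbil_def vec_eq_iff matrix_vector_mult_def transpose_def
      sum_distrib_left algebra_simps)

lemma matrix_mult_outer: "A ** outer v w ** B = outer (A *v v) (transpose B *v w)" for A B :: "complex^3^3"
  by (simp add: outer_def vec_eq_iff matrix_matrix_mult_def matrix_vector_mult_def transpose_def
      sum_3 algebra_simps)

lemma outer_eq_0_iff: "outer v w = 0 \<longleftrightarrow> v = 0 \<or> w = 0"
  by (auto simp: outer_def vec_eq_iff)

section \<open>Points of X at infinity\<close>

definition iso_cone :: "pt set" where
  "iso_cone = {scale_pt t (iso_pt M y) | t M y. M \<in> SO3}"

lemma X_cone_eq: "X_cone = zariski_closure iso_cone"
  unfolding X_cone_def iso_cone_def by simp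

lemma scale_pt_scale_pt: "scale_pt t (scale_pt t' q) = scale_pt (t * t') q"
  by (simp add: scale_pt_def ph_def pM_def px_def py_def pr_def vec_eq_iff mult.assoc)

lemma poly_map_scale_pt: "poly_map (scale_pt t)"
  unfolding poly_map_def scale_pt_def ph_def pM_def px_def py_def pr_def
  by (simp add: polyfun.const polyfun.mult polyfun_coords)

lemma X_cone_scale_pt: "q \<in> X_cone \<Longrightarrow> scale_pt t q \<in> X_cone"
  unfolding X_cone_eq
proof (rule poly_map_zariski_closure[OF poly_map_scale_pt], intro ballI)
  fix s assume "s \<in> iso_cone"
  hence "scale_pt t s \<in> iso_cone" unfolding iso_cone_def using scale_pt_scale_pt by blast
  thus "scale_pt t s \<in> zariski_closure iso_cone" using subset_zariski_closure by blast
qed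

definition rot_z :: "real \<Rightarrow> real \<Rightarrow> real^3^3" where
  "rot_z a b = vector [vector [a, -b, 0], vector [b, a, 0], vector [0, 0, 1]]"

lemma rot_z_SO3: "a^2 + b^2 = 1 \<Longrightarrow> rot_z a b \<in> SO3"
  unfolding SO3_def rot_z_def
  by (simp add: vec_eq_iff forall_3 sum_3 matrix_matrix_mult_def transpose_def mat_def det_3
        power2_eq_square algebra_simps)

text \<open>For |u| = 1, u times the rotation about the z-axis by the angle -arg u; since
  u times its conjugate is 1, its entries are polynomials in u.\<close>
definition rot_z_poly :: "complex \<Rightarrow> complex^3^3" where
  "rot_z_poly u = vector [vector [(u^2+1)/2, -\<i>*(u^2-1)/2, 0], vector [\<i>*(u^2-1)/2, (u^2+1)/2, 0],
     vector [0, 0, u]]"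

lemma rot_z_poly_unit:
  assumes "a^2 + b^2 = 1"
  shows "rot_z_poly (Complex a b) = (\<chi> i j. Complex a b * cmat (rot_z a (-b)) $ i $ j)"
proof -
  have h: "(complex_of_real a)^2 + (complex_of_real b)^2 = 1"
    using assms by (metis of_real_add of_real_power of_real_1)
  have e: "Complex a b = of_real a + \<i> * of_real b" by (simp add: complex_eq_iff)
  have ii: "\<i>^2 = -1" by simp
  show ?thesis
    unfolding e rot_z_poly_def rot_z_def cmat_def
    apply (simp add: vec_eq_iff forall_3)
    apply (intro conjI)
        apply (simp_all add: field_simps)
    using h ii by algebra+
qed

text \<open>k u times the point of v \<mapsto> M (v + d) + c, where M = rot_z_poly u / u is a rotation
  when |u| = 1.\<close>
definition rot_z_pt :: "complex \<Rightarrow> complex \<Rightarrow> complex^3 \<Rightarrow> complex^3 \<Rightarrow> pt" where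
  "rot_z_pt k u d c = (k*u, (\<chi> i j. k * rot_z_poly u $ i $ j),
     (\<chi> i. k * (- u * d$i - (transpose (rot_z_poly u) *v c)$i)),
     (\<chi> i. k * ((rot_z_poly u *v d)$i + u * c$i)),
     k * (u * cbil d d + 2 * cbil (rot_z_poly u *v d) c + u * cbil c c))"

lemma rot_z_pt_unit:
  assumes "a^2 + b^2 = 1"
  shows "rot_z_pt k (Complex a b) (cvec d) (cvec c)
    = scale_pt (k * Complex a b) (iso_pt (rot_z a (-b)) (rot_z a (-b) *v d + c))"
proof -
  define M where "M = rot_z a (-b)"
  define u where "u = Complex a b"
  have "a^2 + (-b)^2 = 1" using assms by simp
  hence orth: "orthogonal_matrix M" unfolding M_def by (intro SO3_orthogonal_matrix rot_z_SO3)
  have UM: "rot_z_poly u = (\<chi> i j. u * cmat M $ i $ j)"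
    unfolding u_def M_def by (rule rot_z_poly_unit[OF assms])
  have tr: "transpose (rot_z_poly u) *v v = u *s (transpose (cmat M) *v v)" for v
    by (simp add: UM transpose_def vec_eq_iff matrix_vector_mult_def sum_distrib_left algebra_simps)
  have mv: "rot_z_poly u *v v = u *s (cmat M *v v)" for v
    by (simp add: UM smult_matrix_vector_mult)
  have x: "- (transpose M *v (M *v d + c)) = - d - transpose M *v c"
    using orth by (simp add: orthogonal_matrix_def matrix_vector_right_distrib matrix_vector_mul_assoc)
  have r: "(M *v d + c) \<bullet> (M *v d + c) = d \<bullet> d + 2 * ((M *v d) \<bullet> c) + c \<bullet> c"
    using orthogonal_matrix_inner[OF orth, of d]
    by (simp add: inner_add_left inner_add_right inner_commute)
  have c1: "(\<chi> i j. k * rot_z_poly u $ i $ j) = (\<chi> i j. k * u * cmat M $ i $ j)"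
    using UM by (simp add: vec_eq_iff)
  have c2: "(\<chi> i. k * (- u * cvec d$i - (transpose (rot_z_poly u) *v cvec c)$i))
      = (\<chi> i. k * u * cvec (- (transpose M *v (M *v d + c))) $ i)"
    unfolding x tr
    by (simp add: vec_eq_iff cvec_diff cvec_minus cvec_matrix_vector_mult cvec_vector_matrix_mult
        cmat_transpose algebra_simps)
  have c3: "(\<chi> i. k * ((rot_z_poly u *v cvec d)$i + u * cvec c$i)) = (\<chi> i. k * u * cvec (M *v d + c) $ i)"
    unfolding mv by (simp add: vec_eq_iff cvec_add cvec_matrix_vector_mult algebra_simps)
  have c4: "k * (u * cbil (cvec d) (cvec d) + 2 * cbil (rot_z_poly u *v cvec d) (cvec c)
        + u * cbil (cvec c) (cvec c))
     = k * u * complex_of_real ((M *v d + c) \<bullet> (M *v d + c))"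
    unfolding r mv
    by (simp add: cbil_scale_left cbil_cvec flip: cvec_matrix_vector_mult) (simp add: algebra_simps)
  show ?thesis
    unfolding M_def[symmetric] u_def[symmetric] rot_z_pt_def scale_pt_def iso_pt_def
      ph_def pM_def px_def py_def pr_def fst_conv snd_conv c1 c2 c3 c4
    by simp
qed

lemma poly_curve_rot_z_pt: "poly_curve (\<lambda>u. rot_z_pt k u d c)"
  unfolding poly_curve_def rot_z_pt_def ph_def pM_def px_def py_def pr_def rot_z_poly_def
  by (simp add: forall_3 matrix_vector_mult_def sum_3 cbil_def transpose_def)
    (intro conjI allI cpoly_fun_intros | simp)+

lemma infinite_unit_circle_arc: "infinite ((\<lambda>a. Complex a (sqrt (1 - a^2))) ` {0..1})"
proof -
  have "inj_on (\<lambda>a. Complex a (sqrt (1 - a^2))) {0..1}"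
    by (rule inj_onI) (simp add: complex_eq_iff)
  thus ?thesis using finite_imageD infinite_Icc[of "0::real" 1] by fastforce
qed

lemma rot_z_pt_X_cone: "rot_z_pt k u (cvec d) (cvec c) \<in> X_cone"
  unfolding X_cone_eq
proof (rule poly_curve_zariski_closure[OF poly_curve_rot_z_pt infinite_unit_circle_arc], intro ballI)
  fix z assume "z \<in> (\<lambda>a. Complex a (sqrt (1 - a^2))) ` {0..1}"
  then obtain a where a: "a \<in> {0..1}" "z = Complex a (sqrt (1 - a^2))" by blast
  hence "a^2 \<le> 1" by (simp add: power_le_one)
  hence unit: "a^2 + (sqrt (1 - a^2))^2 = 1" by simp
  hence "rot_z a (- sqrt (1 - a^2)) \<in> SO3" by (intro rot_z_SO3) simp
  hence "rot_z_pt k z (cvec d) (cvec c) \<in> iso_cone"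
    unfolding a(2) rot_z_pt_unit[OF unit] iso_cone_def by blast
  thus "rot_z_pt k z (cvec d) (cvec c) \<in> zariski_closure iso_cone"
    using subset_zariski_closure by blast
qed

definition e3 :: "complex^3" where "e3 = vector [0, 0, 1]"

definition rot_z_escape :: "complex \<Rightarrow> complex \<Rightarrow> complex^3^3" where
  "rot_z_escape \<alpha> z = vector [vector [(1 + z^4*\<alpha>^2)/2, -\<i>*(1 - z^4*\<alpha>^2)/2, 0],
     vector [\<i>*(1 - z^4*\<alpha>^2)/2, (1 + z^4*\<alpha>^2)/2, 0], vector [0, 0, z^2*\<alpha>]]"

text \<open>The point rot_z_pt (z^4 \<alpha>^2) (1/(\<alpha> z^2)) (d + e3/z) c with the denominators
  cleared: as z \<rightarrow> 0 both the rotation parameter and the translation along the axis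
  diverge, and the curve reaches h = 0 at z = 0.\<close>
definition rot_z_escape_pt :: "complex \<Rightarrow> complex^3 \<Rightarrow> complex^3 \<Rightarrow> complex \<Rightarrow> pt" where
  "rot_z_escape_pt \<alpha> d c z = (z^2*\<alpha>, rot_z_escape \<alpha> z,
     (\<chi> i. - (z^2*\<alpha>*d$i) - z*\<alpha>*e3$i - (transpose (rot_z_escape \<alpha> z) *v c)$i),
     (\<chi> i. (rot_z_escape \<alpha> z *v d)$i + z*\<alpha>*e3$i + z^2*\<alpha>*c$i),
     z^2*\<alpha>*cbil d d + 2*z*\<alpha>*d$3 + \<alpha> + 2*cbil (rot_z_escape \<alpha> z *v d) c + 2*z*\<alpha>*c$3
       + z^2*\<alpha>*cbil c c)"

lemma rot_z_escape_pt_eq: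
  assumes "z \<noteq> 0" "\<alpha> \<noteq> 0"
  shows "rot_z_escape_pt \<alpha> d c z = rot_z_pt (z^4*\<alpha>^2) (1/(\<alpha>*z^2)) (d + (1/z) *s e3) c"
  using assms
  unfolding rot_z_escape_pt_def rot_z_pt_def rot_z_escape_def rot_z_poly_def e3_def
  apply (simp add: vec_eq_iff forall_3 sum_3 matrix_vector_mult_def transpose_def cbil_def)
  apply (intro conjI)
                     apply (simp_all add: field_simps)
  apply algebra+
  done

lemma poly_curve_rot_z_escape_pt: "poly_curve (rot_z_escape_pt \<alpha> d c)"
  unfolding poly_curve_def rot_z_escape_pt_def ph_def pM_def px_def py_def pr_def rot_z_escape_def e3_def
  by (simp add: forall_3 matrix_vector_mult_def sum_3 cbil_def transpose_def)
    (intro conjI allI cpoly_fun_intros | simp)+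

lemma poly_curve_rot_z_escape_pt_param: "poly_curve (\<lambda>\<alpha>. rot_z_escape_pt \<alpha> d c z)"
  unfolding poly_curve_def rot_z_escape_pt_def ph_def pM_def px_def py_def pr_def rot_z_escape_def e3_def
  by (simp add: forall_3 matrix_vector_mult_def sum_3 cbil_def transpose_def)
    (intro conjI allI cpoly_fun_intros | simp)+

lemma infinite_nonzero_reals: "infinite (complex_of_real ` (UNIV - {0}))"
proof -
  have "inj_on complex_of_real (UNIV - {0})" by (rule inj_onI) simp
  moreover have "infinite (UNIV - {0::real})" by (simp add: infinite_UNIV_char_0)
  ultimately show ?thesis using finite_imageD by blast
qed

lemma rot_z_escape_pt_limit_X_cone: "rot_z_escape_pt \<alpha> (cvec d) (cvec c) 0 \<in> X_cone"
proof -
  have "rot_z_escape_pt \<alpha> (cvec d) (cvec c) 0 \<in> zariski_closure iso_cone" if "\<alpha> \<noteq> 0" for \<alpha>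
  proof (rule poly_curve_zariski_closure[OF poly_curve_rot_z_escape_pt infinite_nonzero_reals], intro ballI)
    fix z assume "z \<in> complex_of_real ` (UNIV - {0})"
    then obtain \<sigma> where \<sigma>: "\<sigma> \<noteq> 0" "z = complex_of_real \<sigma>" by blast
    have "cvec (d + (1/\<sigma>) *\<^sub>R axis 3 1) = cvec d + (1/z) *s e3"
      using \<sigma> by (simp add: cvec_add cvec_scaleR cvec_def e3_def vec_eq_iff forall_3 axis_def)
    hence "rot_z_escape_pt \<alpha> (cvec d) (cvec c) z
        = rot_z_pt (z^4*\<alpha>^2) (1/(\<alpha>*z^2)) (cvec (d + (1/\<sigma>) *\<^sub>R axis 3 1)) (cvec c)"
      using rot_z_escape_pt_eq[of z \<alpha>] \<sigma> that by simp
    thus "rot_z_escape_pt \<alpha> (cvec d) (cvec c) z \<in> zariski_closure iso_cone"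
      using rot_z_pt_X_cone X_cone_eq by simp
  qed
  thus ?thesis unfolding X_cone_eq
    by (intro poly_curve_zariski_closure[OF poly_curve_rot_z_escape_pt_param infinite_nonzero_complex])
      auto
qed

definition v0 :: "complex^3" where "v0 = vector [1, \<i>, 0]"
definition w0 :: "complex^3" where "w0 = vector [1, -\<i>, 0]"

lemma standard_inversion_point_X_cone:
  "((0::complex), outer v0 w0, (-\<gamma>) *s w0, \<delta> *s v0, 2*\<alpha> + 2*\<delta>*\<gamma>) \<in> X_cone"
proof -
  define c :: "real^3" where "c = vector [Re \<gamma>, Im \<gamma>, 0]"
  define d :: "real^3" where "d = vector [Re \<delta>, - Im \<delta>, 0]"
  have "scale_pt 2 (rot_z_escape_pt \<alpha> (cvec d) (cvec c) 0)
      = ((0::complex), outer v0 w0, (-\<gamma>) *s w0, \<delta> *s v0, 2*\<alpha> + 2*\<delta>*\<gamma>)"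
    unfolding scale_pt_def rot_z_escape_pt_def rot_z_escape_def c_def d_def cvec_def outer_def v0_def w0_def
      e3_def ph_def pM_def px_def py_def pr_def
    by (simp add: vec_eq_iff forall_3 sum_3 matrix_vector_mult_def transpose_def cbil_def
        complex_eq_iff algebra_simps)
  thus ?thesis using X_cone_scale_pt[OF rot_z_escape_pt_limit_X_cone] by metis
qed

text \<open>The limit \<epsilon> \<rightarrow> 0 of the inversion points with M = \<epsilon> v0 w0^t.\<close>
lemma standard_similarity_point_X_cone: "((0::complex), 0, a *s w0, b *s v0, \<rho>) \<in> X_cone"
proof -
  define H where "H = (\<lambda>\<epsilon>::complex. ((0::complex), (\<chi> i j. \<epsilon> * outer v0 w0 $ i $ j), a *s w0, b *s v0, \<rho>))"
  have "poly_curve H"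
    unfolding poly_curve_def H_def ph_def pM_def px_def py_def pr_def
    by (auto intro!: cpoly_fun_intros)
  moreover have "H \<epsilon> \<in> zariski_closure iso_cone" if "\<epsilon> \<in> UNIV - {0}" for \<epsilon>
  proof -
    have "H \<epsilon> = scale_pt \<epsilon> ((0::complex), outer v0 w0, (-(-a/\<epsilon>)) *s w0, (b/\<epsilon>) *s v0,
              2*(\<rho>/(2*\<epsilon>) + a*b/\<epsilon>^2) + 2*(b/\<epsilon>)*(-a/\<epsilon>))"
      using that unfolding H_def scale_pt_def ph_def pM_def px_def py_def pr_def
      by (simp add: vec_eq_iff field_simps power2_eq_square)
    thus ?thesis using X_cone_scale_pt[OF standard_inversion_point_X_cone] X_cone_eq by metis
  qed
  ultimately have "H 0 \<in> zariski_closure iso_cone"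
    by (intro poly_curve_zariski_closure[OF _ infinite_nonzero_complex]) auto
  moreover have "H 0 = ((0::complex), 0, a *s w0, b *s v0, \<rho>)"
    unfolding H_def by (simp add: vec_eq_iff)
  ultimately show ?thesis using X_cone_eq by simp
qed

text \<open>The point of v \<mapsto> A (M (B v) + y) computed from the point (h, M, x, y, r) of v \<mapsto> M v + y.\<close>
definition rotate_pt :: "real^3^3 \<Rightarrow> real^3^3 \<Rightarrow> pt \<Rightarrow> pt" where
  "rotate_pt A B q = (ph q, cmat A ** pM q ** cmat B, transpose (cmat B) *v px q, cmat A *v py q, pr q)"

lemma poly_map_rotate_pt: "poly_map (rotate_pt A B)"
  unfolding poly_map_def rotate_pt_def ph_def pM_def px_def py_def pr_def
  by (simp add: matrix_matrix_mult_def matrix_vector_mult_def transpose_def sum_3)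
    (intro conjI allI polyfun.add polyfun.mult polyfun.const polyfun_coords)

lemma rotate_pt_iso_pt:
  assumes "A \<in> SO3"
  shows "rotate_pt A B (scale_pt t (iso_pt M y)) = scale_pt t (iso_pt (A ** M ** B) (A *v y))"
proof -
  have oA: "transpose A ** A = mat 1" using SO3_orthogonal_matrix[OF assms] by (simp add: orthogonal_matrix_def)
  have tA: "transpose A *v (A *v y) = y"
    by (simp only: matrix_vector_mul_assoc oA matrix_vector_mul_lid)
  have x: "- (transpose (A ** M ** B) *v (A *v y)) = transpose B *v (- (transpose M *v y))"
  proof -
    have "transpose (A ** M ** B) *v (A *v y) = transpose B *v (transpose M *v (transpose A *v (A *v y)))"
      by (simp only: matrix_transpose_mul matrix_vector_mul_assoc matrix_mul_assoc)
    moreover have "transpose B *v (- w) = - (transpose B *v w)" for w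
      using matrix_vector_mult_diff_distrib[of "transpose B" 0 w] by simp
    ultimately show ?thesis by (simp only: tA)
  qed
  have r: "(A *v y) \<bullet> (A *v y) = y \<bullet> y"
    using orthogonal_matrix_inner[OF SO3_orthogonal_matrix[OF assms]] .
  have sm: "cmat A ** (\<chi> i j. t * C $ i $ j) ** cmat B = (\<chi> i j. t * (cmat A ** C ** cmat B) $ i $ j)" for C
    by (simp add: vec_eq_iff matrix_matrix_mult_def sum_distrib_left sum_distrib_right algebra_simps)
  have sv: "D *v (\<chi> i. t * v $ i) = (\<chi> i. t * (D *v v) $ i)" for D :: "complex^3^3" and v
    by (simp add: vec_eq_iff matrix_vector_mult_def sum_distrib_left algebra_simps)
  show ?thesis
    unfolding rotate_pt_def scale_pt_def iso_pt_def ph_def pM_def px_def py_def pr_def fst_conv snd_conv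
      x r cmat_matrix_mult cvec_matrix_vector_mult cmat_transpose sm sv
    by simp
qed

lemma X_cone_rotate_pt:
  assumes "A \<in> SO3" "B \<in> SO3" "q \<in> X_cone"
  shows "rotate_pt A B q \<in> X_cone"
  using assms(3) unfolding X_cone_eq
proof (rule poly_map_zariski_closure[OF poly_map_rotate_pt, rotated], intro ballI)
  fix s assume "s \<in> iso_cone"
  then obtain t M y where s: "s = scale_pt t (iso_pt M y)" "M \<in> SO3" unfolding iso_cone_def by blast
  have "A ** M ** B \<in> SO3" using SO3_mult assms s by blast
  hence "rotate_pt A B s \<in> iso_cone" unfolding s rotate_pt_iso_pt[OF assms(1)] iso_cone_def by blast
  thus "rotate_pt A B s \<in> zariski_closure iso_cone" using subset_zariski_closure by blast
qed

definition orthonormal_pair :: "real^3 \<Rightarrow> real^3 \<Rightarrow> bool" where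
  "orthonormal_pair u1 u2 \<longleftrightarrow> norm u1 = 1 \<and> norm u2 = 1 \<and> u1 \<bullet> u2 = 0"

definition frame_matrix :: "real^3 \<Rightarrow> real^3 \<Rightarrow> real^3^3" where
  "frame_matrix u1 u2 = transpose (vector [u1, u2, cross3 u1 u2])"

definition iso_vec :: "real^3 \<Rightarrow> real^3 \<Rightarrow> complex^3" where
  "iso_vec u1 u2 = cvec u1 + \<i> *s cvec u2"

lemma iso_vec_nth: "iso_vec u1 u2 $ k = Complex (u1$k) (u2$k)"
  by (simp add: iso_vec_def cvec_def complex_eq_iff)

lemma orthonormal_pair_inner:
  assumes "orthonormal_pair u1 u2"
  shows "u1 \<bullet> u1 = 1" "u2 \<bullet> u2 = 1" "u1 \<bullet> u2 = 0" "u1 \<bullet> cross3 u1 u2 = 0" "u2 \<bullet> cross3 u1 u2 = 0"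
    "cross3 u1 u2 \<bullet> cross3 u1 u2 = 1"
proof -
  show "u1 \<bullet> u1 = 1" "u2 \<bullet> u2 = 1" "u1 \<bullet> u2 = 0" using assms
    by (auto simp: orthonormal_pair_def inner_commute dot_square_norm)
  show "u1 \<bullet> cross3 u1 u2 = 0" "u2 \<bullet> cross3 u1 u2 = 0"
    using dot_cross_self by (auto simp: inner_commute)
  have "(norm (cross3 u1 u2))\<^sup>2 = 1" using norm_cross_dot[of u1 u2] assms
    by (simp add: orthonormal_pair_def)
  thus "cross3 u1 u2 \<bullet> cross3 u1 u2 = 1" by (simp add: dot_square_norm)
qed

lemma frame_matrix_SO3:
  assumes "orthonormal_pair u1 u2"
  shows "frame_matrix u1 u2 \<in> SO3"
proof -
  note f = orthonormal_pair_inner[OF assms]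
  let ?R = "vector [u1, u2, cross3 u1 u2] :: real^3^3"
  have "(?R ** transpose ?R) $ i $ j = ?R $ i \<bullet> ?R $ j" for i j
    by (simp add: matrix_matrix_mult_def transpose_def inner_vec_def)
  hence "?R ** transpose ?R = mat 1"
    unfolding vec_eq_iff using f by (simp add: forall_3 mat_def inner_commute)
  moreover have "det ?R = 1"
  proof -
    have "det ?R = u1 \<bullet> cross3 u2 (cross3 u1 u2)" by (simp add: dot_cross_det)
    also have "\<dots> = cross3 u1 u2 \<bullet> cross3 u1 u2" by (simp add: cross3_simps)
    finally show ?thesis using f by simp
  qed
  ultimately show ?thesis unfolding SO3_def frame_matrix_def by (simp add: det_transpose)
qed

lemma frame_matrix_v0: "cmat (frame_matrix u1 u2) *v v0 = iso_vec u1 u2"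
  by (simp add: frame_matrix_def cmat_def v0_def iso_vec_def cvec_def vec_eq_iff forall_3
      matrix_vector_mult_def sum_3 transpose_def)

lemma frame_matrix_w0: "transpose (cmat (transpose (frame_matrix u1 (-u2)))) *v w0 = iso_vec u1 u2"
  by (simp add: frame_matrix_def cmat_def w0_def iso_vec_def cvec_def vec_eq_iff forall_3
      matrix_vector_mult_def sum_3 transpose_def)

lemma X_cone_inversion_point:
  assumes "orthonormal_pair u1 u2" "orthonormal_pair U1 U2"
  shows "((0::complex), outer (iso_vec U1 U2) (iso_vec u1 u2), (-\<gamma>) *s iso_vec u1 u2,
    \<delta> *s iso_vec U1 U2, 2*\<alpha> + 2*\<delta>*\<gamma>) \<in> X_cone"
proof -
  have "orthonormal_pair u1 (-u2)" using assms(1) by (simp add: orthonormal_pair_def)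
  hence "rotate_pt (frame_matrix U1 U2) (transpose (frame_matrix u1 (-u2)))
      ((0::complex), outer v0 w0, (-\<gamma>) *s w0, \<delta> *s v0, 2*\<alpha> + 2*\<delta>*\<gamma>) \<in> X_cone"
    by (intro X_cone_rotate_pt frame_matrix_SO3 SO3_transpose assms standard_inversion_point_X_cone)
  thus ?thesis
    unfolding rotate_pt_def ph_def pM_def px_def py_def pr_def fst_conv snd_conv matrix_mult_outer
      matrix_vector_mult_smult frame_matrix_v0 frame_matrix_w0 .
qed

lemma X_cone_similarity_point:
  assumes "orthonormal_pair u1 u2" "orthonormal_pair U1 U2"
  shows "((0::complex), 0, a *s iso_vec u1 u2, b *s iso_vec U1 U2, \<rho>) \<in> X_cone"
proof -
  have "orthonormal_pair u1 (-u2)" using assms(1) by (simp add: orthonormal_pair_def)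
  hence "rotate_pt (frame_matrix U1 U2) (transpose (frame_matrix u1 (-u2)))
      ((0::complex), 0, a *s w0, b *s v0, \<rho>) \<in> X_cone"
    by (intro X_cone_rotate_pt frame_matrix_SO3 SO3_transpose assms standard_similarity_point_X_cone)
  moreover have "cmat A ** 0 ** cmat B = 0" for A B
    by (simp add: vec_eq_iff matrix_matrix_mult_def)
  ultimately show ?thesis
    unfolding rotate_pt_def ph_def pM_def px_def py_def pr_def fst_conv snd_conv matrix_vector_mult_smult
      frame_matrix_v0 frame_matrix_w0
    by simp
qed

section \<open>Isotropic vectors and their points on the sphere\<close>

lemma iso_vec_eq_0_iff: "iso_vec u1 u2 = 0 \<longleftrightarrow> u1 = 0 \<and> u2 = 0"
  by (auto simp: vec_eq_iff iso_vec_nth complex_eq_iff)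

lemma iso_vec_nonzero: "orthonormal_pair u1 u2 \<Longrightarrow> iso_vec u1 u2 \<noteq> 0"
  by (auto simp: orthonormal_pair_def iso_vec_eq_0_iff)

lemma cbil_iso_vec:
  "cbil (iso_vec u1 u2) (iso_vec u1 u2) = Complex (u1 \<bullet> u1 - u2 \<bullet> u2) (2 * (u1 \<bullet> u2))"
  unfolding cbil_def iso_vec_nth
  by (simp add: sum_3 inner_vec_def complex_eq_iff power2_eq_square algebra_simps)

lemma isotropic_iso_vec: "orthonormal_pair u1 u2 \<Longrightarrow> isotropic (iso_vec u1 u2)"
  using orthonormal_pair_inner[of u1 u2] by (simp add: isotropic_def cbil_iso_vec complex_eq_iff)

lemma isotropic_eq_smult_iso_vec:
  assumes "isotropic w" "w \<noteq> 0"
  obtains l u1 u2 where "l \<noteq> 0" "orthonormal_pair u1 u2" "w = l *s iso_vec u1 u2"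
proof -
  define a :: "real^3" where "a = (\<chi> k. Re (w$k))"
  define b :: "real^3" where "b = (\<chi> k. Im (w$k))"
  have w: "w = iso_vec a b" by (simp add: a_def b_def vec_eq_iff iso_vec_nth complex_eq_iff)
  hence ab: "a \<bullet> a = b \<bullet> b" "a \<bullet> b = 0"
    using assms(1) by (simp_all add: isotropic_def cbil_iso_vec complex_eq_iff)
  have "a \<noteq> 0"
    using assms(2) ab(1) by (auto simp: w iso_vec_eq_0_iff)
  define l where "l = norm a"
  have l0: "l > 0" using \<open>a \<noteq> 0\<close> by (simp add: l_def)
  have nb: "norm b = l" unfolding l_def norm_eq_sqrt_inner ab(1) ..
  have "orthonormal_pair ((1/l) *\<^sub>R a) ((1/l) *\<^sub>R b)"
    unfolding orthonormal_pair_def using l0 nb ab(2) by (simp add: l_def)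
  moreover have "w = complex_of_real l *s iso_vec ((1/l) *\<^sub>R a) ((1/l) *\<^sub>R b)"
    using l0 by (simp add: w vec_eq_iff iso_vec_nth complex_eq_iff)
  ultimately show ?thesis using l0 that[of "complex_of_real l"] by simp
qed

lemma P1_to_S2_scale: "l \<noteq> 0 \<Longrightarrow> P1_to_S2 (l*a, l*b) = P1_to_S2 (a, b)"
  by (simp add: P1_to_S2_def)

lemma P1_to_S2_infinity: "P1_to_S2 (0, b) = vector [0, 0, 1]"
  by (simp add: P1_to_S2_def)

lemma Smap_scale:
  assumes "l \<noteq> 0"
  shows "Smap (l *s u) = Smap u"
proof -
  have "\<i> * (l * u$1) + l * u$2 = l * (\<i> * u$1 + u$2)" by (simp add: algebra_simps)
  hence c: "(\<i> * (l * u$1) + l * u$2, l * u$3) \<noteq> (0, 0) \<longleftrightarrow> (\<i> * u$1 + u$2, u$3) \<noteq> (0, 0)"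
    using assms by simp
  have "l * u$1 - \<i> * (l * u$2) = l * (u$1 - \<i> * u$2)" "- (l * u$1) - \<i> * (l * u$2) = l * (- u$1 - \<i> * u$2)"
    by (simp_all add: algebra_simps)
  thus ?thesis
    unfolding Smap_def Let_def vector_smult_component c
    using P1_to_S2_scale[OF assms] by (simp add: P1_to_S2_infinity)
qed

text \<open>The identities behind S(u1 + i u2) = -n for an orthonormal frame (u1, u2, n),
  written in coordinates a = u1, b = u2; x + i y is the affine P^1 coordinate of u1 + i u2.\<close>
lemma stereographic_frame_identities:
  fixes a1 a2 a3 b1 b2 b3 :: real
  assumes ra: "a1*a1 + a2*a2 + a3*a3 = 1" and rb: "b1*b1 + b2*b2 + b3*b3 = 1"
    and c13: "a1*a3 + b1*b3 + n1*n3 = 0" and c23: "a2*a3 + b2*b3 + n2*n3 = 0"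
    and c33: "a3*a3 + b3*b3 + n3*n3 = 1"
    and n1: "n1 = a2*b3 - a3*b2" and n2: "n2 = a3*b1 - a1*b3" and n3: "n3 = a1*b2 - a2*b1"
    and N: "N = (a1+b2)^2 + (b1-a2)^2" "N \<noteq> 0"
    and x: "x = (a3*(a1+b2) + b3*(b1-a2))/N" and y: "y = (b3*(a1+b2) - a3*(b1-a2))/N"
  shows "2*x/(x^2+y^2+1) = -n1" "2*y/(x^2+y^2+1) = -n2" "(x^2+y^2-1)/(x^2+y^2+1) = -n3"
proof -
  have pq: "(a3*(a1+b2) + b3*(b1-a2))^2 + (b3*(a1+b2) - a3*(b1-a2))^2 = (a3*a3+b3*b3)*N"
    unfolding N(1) by algebra
  have s: "x^2 + y^2 = (a3*a3+b3*b3)/N"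
  proof -
    have "x^2 + y^2 = ((a3*(a1+b2) + b3*(b1-a2))^2 + (b3*(a1+b2) - a3*(b1-a2))^2)/N^2"
      unfolding x y by (simp only: power_divide add_divide_distrib[symmetric])
    also have "\<dots> = (a3*a3+b3*b3)/N" unfolding pq using N(2) by (simp add: power2_eq_square)
    finally show ?thesis .
  qed
  have N': "N = 2 + 2*n3 - a3*a3 - b3*b3" unfolding N(1) n3 using ra rb by algebra
  have h: "x^2+y^2+1 = 2*(1+n3)/N" unfolding s using N' N(2) by (simp add: field_simps)
  have "x^2+y^2+1 > 0" by (simp add: add_nonneg_pos)
  hence D: "2*(1+n3)/N \<noteq> 0" unfolding h by (rule not_sym[OF less_imp_neq])
  have P: "a3*(a1+b2) + b3*(b1-a2) = -n1*(1+n3)" using c13 n1 n3 by algebra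
  have Q: "b3*(a1+b2) - a3*(b1-a2) = -n2*(1+n3)" using c23 n2 n3 by algebra
  show "2*x/(x^2+y^2+1) = -n1" unfolding h using D
    by (simp add: divide_eq_eq x P) (simp add: field_simps N(2))
  show "2*y/(x^2+y^2+1) = -n2" unfolding h using D
    by (simp add: divide_eq_eq y Q) (simp add: field_simps N(2))
  have "x^2+y^2-1 = (a3*a3+b3*b3 - N)/N" unfolding s using N(2) by (simp add: field_simps)
  moreover have "a3*a3+b3*b3 - N = -n3*(2*(1+n3))" using N' c33 by algebra
  ultimately show "(x^2+y^2-1)/(x^2+y^2+1) = -n3" unfolding h using D N(2) by (simp add: divide_eq_eq)
qed

lemma P1_to_S2_frame:
  fixes a1 a2 a3 b1 b2 b3 :: real
  assumes ra: "a1*a1 + a2*a2 + a3*a3 = 1" and rb: "b1*b1 + b2*b2 + b3*b3 = 1"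
    and c13: "a1*a3 + b1*b3 + n1*n3 = 0" and c23: "a2*a3 + b2*b3 + n2*n3 = 0"
    and c33: "a3*a3 + b3*b3 + n3*n3 = 1"
    and n: "n1 = a2*b3 - a3*b2" "n2 = a3*b1 - a1*b3" "n3 = a1*b2 - a2*b1"
    and N: "(a1+b2)^2 + (b1-a2)^2 \<noteq> 0"
  shows "P1_to_S2 (Complex (a1+b2) (b1-a2), Complex a3 b3) = vector [-n1, -n2, -n3]"
proof -
  define N where "N = (a1+b2)^2 + (b1-a2)^2"
  define x where "x = (a3*(a1+b2) + b3*(b1-a2))/N"
  define y where "y = (b3*(a1+b2) - a3*(b1-a2))/N"
  have "Complex (a1+b2) (b1-a2) \<noteq> 0" using N by (auto simp: complex_eq_iff)
  moreover have "Re (Complex a3 b3 / Complex (a1+b2) (b1-a2)) = x"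
    "Im (Complex a3 b3 / Complex (a1+b2) (b1-a2)) = y"
    unfolding x_def y_def N_def by (simp_all add: Re_divide Im_divide)
  ultimately have "P1_to_S2 (Complex (a1+b2) (b1-a2), Complex a3 b3)
      = (1 / (x^2 + y^2 + 1)) *\<^sub>R vector [2*x, 2*y, x^2 + y^2 - 1]"
    by (simp add: P1_to_S2_def)
  also have "\<dots> = vector [-n1, -n2, -n3]"
    using stereographic_frame_identities[OF ra rb c13 c23 c33 n N_def N[folded N_def] x_def y_def]
    by (simp add: vec_eq_iff forall_3 vector_def)
  finally show ?thesis .
qed

lemma frame_matrix_rows:
  assumes "orthonormal_pair u1 u2"
  shows "u1$i*u1$j + u2$i*u2$j + cross3 u1 u2$i*cross3 u1 u2$j = (if i = j then 1 else 0)"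
proof -
  have "frame_matrix u1 u2 ** transpose (frame_matrix u1 u2) = mat 1"
    using SO3_orthogonal_matrix[OF frame_matrix_SO3[OF assms]] by (simp add: orthogonal_matrix_def)
  hence "(frame_matrix u1 u2 ** transpose (frame_matrix u1 u2)) $ i $ j = mat 1 $ i $ j" by simp
  thus ?thesis by (simp add: frame_matrix_def matrix_matrix_mult_def transpose_def sum_3 mat_def)
qed

lemma Smap_iso_vec:
  assumes o: "orthonormal_pair u1 u2"
  shows "Smap (iso_vec u1 u2) = - cross3 u1 u2"
proof -
  define a1 a2 a3 b1 b2 b3 where "a1 = u1$1" "a2 = u1$2" "a3 = u1$3" "b1 = u2$1" "b2 = u2$2" "b3 = u2$3"
  define n1 n2 n3 where "n1 = cross3 u1 u2$1" "n2 = cross3 u1 u2$2" "n3 = cross3 u1 u2$3"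
  note defs = a1_a2_a3_b1_b2_b3_def n1_n2_n3_def
  have n: "n1 = a2*b3 - a3*b2" "n2 = a3*b1 - a1*b3" "n3 = a1*b2 - a2*b1"
    unfolding defs by (simp_all add: cross3_def)
  have ra: "a1*a1 + a2*a2 + a3*a3 = 1" and rb: "b1*b1 + b2*b2 + b3*b3 = 1"
    and rab: "a1*b1 + a2*b2 + a3*b3 = 0"
    using orthonormal_pair_inner(1-3)[OF o] unfolding defs by (simp_all add: inner_vec_def sum_3)
  have c13: "a1*a3 + b1*b3 + n1*n3 = 0" and c23: "a2*a3 + b2*b3 + n2*n3 = 0"
    and c33: "a3*a3 + b3*b3 + n3*n3 = 1"
    using frame_matrix_rows[OF o, of 1 3] frame_matrix_rows[OF o, of 2 3] frame_matrix_rows[OF o, of 3 3]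
    unfolding defs by simp_all
  have rhs: "- cross3 u1 u2 = vector [-n1, -n2, -n3]"
    unfolding n1_n2_n3_def by (simp add: vec_eq_iff forall_3)
  have S: "Smap (iso_vec u1 u2) = P1_to_S2 (if (\<i> * Complex a1 b1 + Complex a2 b2, Complex a3 b3) \<noteq> (0, 0)
      then (Complex (a1+b2) (b1-a2), Complex a3 b3) else (Complex a3 b3, - Complex a1 b1 - \<i> * Complex a2 b2))"
  proof -
    have "Complex a1 b1 - \<i> * Complex a2 b2 = Complex (a1+b2) (b1-a2)" by (simp add: complex_eq_iff)
    thus ?thesis unfolding Smap_def Let_def iso_vec_nth defs[symmetric] by simp
  qed
  define N where "N = (a1+b2)^2 + (b1-a2)^2"
  show ?thesis
  proof (cases "N = 0")
    case True
    hence e: "a1 = -b2" "b1 = a2" unfolding N_def by (auto simp: add_nonneg_eq_0_iff)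
    hence "a3*b3 = 0" "a3*a3 = b3*b3" using ra rb rab by (simp_all add: algebra_simps)
    hence "a3 = 0" "b3 = 0" by auto
    with e have "n1 = 0" "n2 = 0" "n3 = -1" "Smap (iso_vec u1 u2) = vector [0, 0, 1]"
      using n rb unfolding S by (auto simp: algebra_simps complex_eq_iff P1_to_S2_def)
    thus ?thesis unfolding rhs by simp
  next
    case False
    hence "(\<i> * Complex a1 b1 + Complex a2 b2, Complex a3 b3) \<noteq> (0, 0)"
      unfolding N_def by (auto simp: complex_eq_iff)
    thus ?thesis
      unfolding S rhs using P1_to_S2_frame[OF ra rb c13 c23 c33 n False[unfolded N_def]] by simp
  qed
qed

lemma adapted_basis_orthonormal_pair:
  assumes "adapted_basis L u1 u2"
  shows "orthonormal_pair u1 u2" "L = - cross3 u1 u2"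
  using assms unfolding adapted_basis_def orthonormal_pair_def by auto

lemma adapted_basis_cross3:
  assumes "orthonormal_pair u1 u2"
  shows "adapted_basis (- cross3 u1 u2) u1 u2"
  using orthonormal_pair_inner[OF assms] assms unfolding adapted_basis_def orthonormal_pair_def
  by (simp add: inner_commute)

lemma isotropic_eq_smult_adapted:
  assumes "isotropic w" "w \<noteq> 0"
  obtains l u1 u2 where "l \<noteq> 0" "adapted_basis (Smap w) u1 u2" "w = l *s iso_vec u1 u2"
proof -
  obtain l u1 u2 where l: "l \<noteq> 0" "orthonormal_pair u1 u2" "w = l *s iso_vec u1 u2"
    using isotropic_eq_smult_iso_vec[OF assms] .
  have "Smap w = - cross3 u1 u2" unfolding l(3) Smap_scale[OF l(1)] Smap_iso_vec[OF l(2)] ..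
  thus ?thesis using that l adapted_basis_cross3 by metis
qed

lemma adapted_basis_iso_vec:
  assumes "adapted_basis L u1 u2"
  shows "iso_vec u1 u2 \<noteq> 0" "isotropic (iso_vec u1 u2)" "Smap (iso_vec u1 u2) = L"
  using iso_vec_nonzero isotropic_iso_vec Smap_iso_vec adapted_basis_orthonormal_pair[OF assms]
  by simp_all

lemma cbil_iso_vec_plane_coord:
  assumes "adapted_basis L u1 u2"
  shows "cbil (cvec p) (iso_vec u1 u2) = plane_coord u1 u2 (proj L p)"
proof -
  have "L \<bullet> u1 = 0" "L \<bullet> u2 = 0" using assms by (auto simp: adapted_basis_def inner_commute)
  hence "proj L p \<bullet> u1 = p \<bullet> u1" "proj L p \<bullet> u2 = p \<bullet> u2" by (simp_all add: proj_def inner_diff_left)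
  moreover have "cbil (cvec p) (iso_vec u1 u2) = Complex (p \<bullet> u1) (p \<bullet> u2)"
    unfolding cbil_def iso_vec_nth cvec_def by (simp add: sum_3 inner_vec_def complex_eq_iff)
  ultimately show ?thesis by (simp add: plane_coord_def)
qed

section \<open>Equations of X\<close>

lemma X_cone_vanish:
  assumes "f \<in> polyfun" "\<And>t M y. M \<in> SO3 \<Longrightarrow> f (scale_pt t (iso_pt M y)) = 0" "q \<in> X_cone"
  shows "f q = 0"
  using zariski_closure_vanish[OF assms(3)[unfolded X_cone_eq] assms(1)] assms(2)
  unfolding iso_cone_def by blast

lemma scale_pt_iso_pt:
  "ph (scale_pt t (iso_pt M y)) = t"
  "pM (scale_pt t (iso_pt M y)) = (\<chi> i j. t * cmat M $ i $ j)"
  "px (scale_pt t (iso_pt M y)) = t *s cvec (- (transpose M *v y))"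
  "py (scale_pt t (iso_pt M y)) = t *s cvec y"
  "pr (scale_pt t (iso_pt M y)) = t * complex_of_real (y \<bullet> y)"
  by (simp_all add: scale_pt_def iso_pt_def ph_def pM_def px_def py_def pr_def vec_eq_iff)

lemma polyfun_cbil:
  assumes "\<And>i. (\<lambda>v. f v $ i) \<in> polyfun" "\<And>i. (\<lambda>v. g v $ i) \<in> polyfun"
  shows "(\<lambda>v. cbil (f v) (g v)) \<in> polyfun"
  unfolding cbil_def sum_3 by (intro polyfun.add polyfun.mult assms)

lemma polyfun_diff_mult_h_r: "f \<in> polyfun \<Longrightarrow> (\<lambda>v. f v - ph v * pr v) \<in> polyfun"
  using polyfun.add[OF _ polyfun.mult[OF polyfun.mult[OF polyfun.const[of "-1"] polyfun.coord_h]
      polyfun.coord_r]]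
  by simp

lemma X_cone_hy_Mx:
  assumes "q \<in> X_cone"
  shows "ph q *s py q + pM q *v px q = 0"
proof -
  have "ph q * py q $ i + (pM q *v px q) $ i = 0" for i
  proof (rule X_cone_vanish[where f = "\<lambda>v. ph v * py v $ i + (pM v *v px v) $ i", OF _ _ assms])
    show "(\<lambda>v. ph v * py v $ i + (pM v *v px v) $ i) \<in> polyfun"
      unfolding ph_def pM_def px_def py_def matrix_vector_mult_def
      by (simp add: sum_3) (intro polyfun.add polyfun.mult polyfun_coords)
  next
    fix t M y assume "M \<in> SO3"
    hence o: "M ** transpose M = mat 1" using SO3_orthogonal_matrix orthogonal_matrix_def by blast
    have "M *v (transpose M *v y) = y"
      by (simp only: matrix_vector_mul_assoc o matrix_vector_mul_lid)
    hence "y + M *v (- (transpose M *v y)) = 0"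
      using matrix_vector_mult_diff_distrib[of M 0 "transpose M *v y"] by simp
    hence "cvec y + cmat M *v cvec (- (transpose M *v y)) = 0"
      by (metis cvec_add cvec_matrix_vector_mult cvec_zero)
    hence "(t *s (t *s (cvec y + cmat M *v cvec (- (transpose M *v y))))) $ i = 0" by simp
    thus "ph (scale_pt t (iso_pt M y)) * py (scale_pt t (iso_pt M y)) $ i
        + (pM (scale_pt t (iso_pt M y)) *v px (scale_pt t (iso_pt M y))) $ i = 0"
      unfolding scale_pt_iso_pt smult_matrix_vector_mult matrix_vector_mult_smult
      by (simp add: algebra_simps)
  qed
  thus ?thesis by (simp add: vec_eq_iff)
qed

lemma X_cone_hx_Mty:
  assumes "q \<in> X_cone"
  shows "ph q *s px q + transpose (pM q) *v py q = 0"
proof -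
  have "ph q * px q $ i + (transpose (pM q) *v py q) $ i = 0" for i
  proof (rule X_cone_vanish[where f = "\<lambda>v. ph v * px v $ i + (transpose (pM v) *v py v) $ i", OF _ _ assms])
    show "(\<lambda>v. ph v * px v $ i + (transpose (pM v) *v py v) $ i) \<in> polyfun"
      unfolding ph_def pM_def px_def py_def matrix_vector_mult_def transpose_def
      by (simp add: sum_3) (intro polyfun.add polyfun.mult polyfun_coords)
  next
    fix t M y assume "M \<in> SO3"
    have "cvec (- (transpose M *v y)) + transpose (cmat M) *v cvec y = 0"
      by (simp add: cvec_minus cvec_matrix_vector_mult cvec_vector_matrix_mult cmat_transpose)
    hence "(t *s (t *s (cvec (- (transpose M *v y)) + transpose (cmat M) *v cvec y))) $ i = 0" by simp
    thus "ph (scale_pt t (iso_pt M y)) * px (scale_pt t (iso_pt M y)) $ i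
        + (transpose (pM (scale_pt t (iso_pt M y))) *v py (scale_pt t (iso_pt M y))) $ i = 0"
      unfolding scale_pt_iso_pt smult_transpose_matrix_vector_mult matrix_vector_mult_smult
      by (simp add: algebra_simps)
  qed
  thus ?thesis by (simp add: vec_eq_iff)
qed

lemma X_cone_xx_hr:
  assumes "q \<in> X_cone"
  shows "cbil (px q) (px q) = ph q * pr q"
proof -
  have "cbil (px q) (px q) - ph q * pr q = 0"
  proof (rule X_cone_vanish[where f = "\<lambda>v. cbil (px v) (px v) - ph v * pr v", OF _ _ assms])
    show "(\<lambda>v. cbil (px v) (px v) - ph v * pr v) \<in> polyfun"
      by (intro polyfun_diff_mult_h_r polyfun_cbil polyfun.coord_x)
  next
    fix t M y assume "M \<in> SO3"
    hence "orthogonal_matrix (transpose M)" by (simp add: SO3_orthogonal_matrix)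
    hence "(transpose M *v y) \<bullet> (transpose M *v y) = y \<bullet> y" by (rule orthogonal_matrix_inner)
    thus "cbil (px (scale_pt t (iso_pt M y))) (px (scale_pt t (iso_pt M y)))
        - ph (scale_pt t (iso_pt M y)) * pr (scale_pt t (iso_pt M y)) = 0"
      unfolding scale_pt_iso_pt
      by (simp add: cbil_scale_left cbil_scale_right cbil_cvec cvec_minus cbil_minus_left cbil_minus_right)
  qed
  thus ?thesis by simp
qed

lemma X_cone_yy_hr:
  assumes "q \<in> X_cone"
  shows "cbil (py q) (py q) = ph q * pr q"
proof -
  have "cbil (py q) (py q) - ph q * pr q = 0"
  proof (rule X_cone_vanish[where f = "\<lambda>v. cbil (py v) (py v) - ph v * pr v", OF _ _ assms])
    show "(\<lambda>v. cbil (py v) (py v) - ph v * pr v) \<in> polyfun"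
      by (intro polyfun_diff_mult_h_r polyfun_cbil polyfun.coord_y)
  next
    fix t M y
    show "cbil (py (scale_pt t (iso_pt M y))) (py (scale_pt t (iso_pt M y)))
        - ph (scale_pt t (iso_pt M y)) * pr (scale_pt t (iso_pt M y)) = 0"
      unfolding scale_pt_iso_pt by (simp add: cbil_scale_left cbil_scale_right cbil_cvec)
  qed
  thus ?thesis by simp
qed

definition ccross :: "complex^3 \<Rightarrow> complex^3 \<Rightarrow> complex^3" where
  "ccross a b = vector [a$2*b$3 - a$3*b$2, a$3*b$1 - a$1*b$3, a$1*b$2 - a$2*b$1]"

lemma ccross_ccross_right: "ccross a (ccross b c) = cbil a c *s b - cbil a b *s c"
  unfolding ccross_def cbil_def sum_3 vec_eq_iff forall_3 vector_3 vector_smult_component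
    vector_minus_component
  by (simp add: algebra_simps)

lemma ccross_ccross_left: "ccross (ccross a b) c = cbil a c *s b - cbil b c *s a"
  unfolding ccross_def cbil_def sum_3 vec_eq_iff forall_3 vector_3 vector_smult_component
    vector_minus_component
  by (simp add: algebra_simps)

lemma ccross_smult_left: "ccross (k *s a) b = k *s ccross a b"
  by (simp add: ccross_def vec_eq_iff forall_3 algebra_simps)

lemma ccross_eq_0_parallel:
  assumes "w \<noteq> 0" "ccross w x = 0"
  shows "\<exists>a. x = a *s w"
proof -
  have c: "w$2*x$3 = w$3*x$2" "w$3*x$1 = w$1*x$3" "w$1*x$2 = w$2*x$1"
    using assms(2) unfolding ccross_def vec_eq_iff forall_3 vector_3 by simp_all
  obtain k where k: "w$k \<noteq> 0" using assms(1) by (auto simp: vec_eq_iff)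
  have "x$j * w$k = x$k * w$j" for j
  proof -
    have "j = 1 \<or> j = 2 \<or> j = 3" "k = 1 \<or> k = 2 \<or> k = 3" using exhaust_3 by blast+
    thus ?thesis using c by (elim disjE) (simp_all add: mult.commute)
  qed
  hence "x$j = x$k / w$k * w$j" for j using k by (simp add: field_simps)
  hence "x = (x$k / w$k) *s w" unfolding vec_eq_iff vector_smult_component by blast
  thus ?thesis by blast
qed

text \<open>For isotropic orthogonal w, x both w \<times> (w \<times> x) and (w \<times> x) \<times> x vanish: the first
  gives w \<times> x = c w, and then the second gives c^2 w = 0.\<close>
lemma isotropic_orthogonal_parallel:
  assumes "w \<noteq> 0" "isotropic w" "isotropic x" "cbil w x = 0"
  shows "\<exists>a. x = a *s w"
proof -
  define k where "k = ccross w x"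
  have "ccross w k = 0" using assms unfolding k_def ccross_ccross_right isotropic_def by simp
  then obtain c where c: "k = c *s w" using ccross_eq_0_parallel[OF assms(1)] by blast
  have "ccross k x = 0"
    using assms unfolding k_def ccross_ccross_left isotropic_def by (simp add: cbil_commute)
  hence "(c * c) *s w = 0" unfolding c ccross_smult_left by (simp add: k_def[symmetric] c)
  hence "c = 0" using assms(1) by (auto simp: vec_eq_iff)
  hence "ccross w x = 0" using c k_def by simp
  thus ?thesis using ccross_eq_0_parallel[OF assms(1)] by blast
qed

lemma inversion_point_coords:
  assumes "inversion_point \<beta>" "inv_LR \<beta> L R v w"
  obtains a b where "px \<beta> = a *s w" "py \<beta> = b *s v" "pr \<beta> + 2*a*b \<noteq> 0"
proof -
  have X: "\<beta> \<in> X_cone" and h0: "ph \<beta> = 0" and N: "Nmat \<beta> \<noteq> 0"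
    using assms(1) unfolding inversion_point_def in_boundary_def inX_def by auto
  have v: "v \<noteq> 0" "isotropic v" and w: "w \<noteq> 0" "isotropic w" and M: "pM \<beta> = outer v w"
    using assms(2) unfolding inv_LR_def by auto
  have "cbil w (px \<beta>) *s v = 0" using X_cone_hy_Mx[OF X] h0 M outer_matrix_vector_mult by simp
  hence "cbil w (px \<beta>) = 0" using v(1) by (auto simp: vec_eq_iff)
  moreover have "isotropic (px \<beta>)" using X_cone_xx_hr[OF X] h0 by (simp add: isotropic_def)
  ultimately obtain a where a: "px \<beta> = a *s w" using isotropic_orthogonal_parallel w by blast
  have "cbil v (py \<beta>) *s w = 0"
    using X_cone_hx_Mty[OF X] h0 M transpose_outer_matrix_vector_mult by simp
  hence "cbil v (py \<beta>) = 0" using w(1) by (auto simp: vec_eq_iff)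
  moreover have "isotropic (py \<beta>)" using X_cone_yy_hr[OF X] h0 by (simp add: isotropic_def)
  ultimately obtain b where b: "py \<beta> = b *s v" using isotropic_orthogonal_parallel v by blast
  have "Nmat \<beta> = (\<chi> i j. (pr \<beta> + 2*a*b) * outer v w $ i $ j)"
    unfolding Nmat_def M a b by (simp add: outer_def vec_eq_iff algebra_simps)
  hence "pr \<beta> + 2*a*b \<noteq> 0" using N by (auto simp: vec_eq_iff)
  thus ?thesis using that a b by blast
qed

section \<open>Bonds\<close>

lemma lform_at_infinity:
  assumes "ph \<beta> = 0" "pM \<beta> = outer (k *s v) w" "px \<beta> = a *s w" "py \<beta> = b *s v"
  shows "lform p P d \<beta> = pr \<beta> - 2*a*cbil (cvec p) w - 2*b*cbil (cvec P) v
    - 2*k*cbil (cvec p) w * cbil (cvec P) v"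
  unfolding lform_def assms outer_matrix_vector_mult
  by (simp add: cbil_scale_left cbil_scale_right cbil_commute[of w] cbil_commute[of v] algebra_simps)

lemma is_bond_at_infinity:
  assumes "is_bond n p P d \<beta>"
  shows "\<beta> \<in> X_cone" "ph \<beta> = 0" "\<And>i. i < n \<Longrightarrow> lform (p i) (P i) (d i) \<beta> = 0"
  using assms unfolding is_bond_def in_boundary_def inX_def by auto

text \<open>The leg equation factors as (m Z + a)(l z + b) = r/2 + a b.\<close>
lemma moebius_of_leg_equation:
  fixes l m a b r z Z :: complex
  assumes "l \<noteq> 0" "m \<noteq> 0" "r + 2*a*b \<noteq> 0" "r - 2*a*(l*z) - 2*b*(m*Z) - 2*(l*z)*(m*Z) = 0"
  shows "z \<noteq> -b/l" "((r/2+a*b)/(l*m))/(z - (-b/l)) + (-a/m) = Z"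
proof -
  have e: "(m*Z + a)*(l*z + b) = r/2 + a*b" using assms(4) by (simp add: algebra_simps)
  have "r/2 + a*b \<noteq> 0" using assms(3) by (simp add: field_simps)
  hence nz: "l*z + b \<noteq> 0" using e by auto
  thus "z \<noteq> -b/l" using assms(1) by (auto simp: field_simps)
  have "z - (-b/l) = (l*z + b)/l" using assms(1) by (simp add: field_simps)
  hence "((r/2+a*b)/(l*m))/(z - (-b/l)) = (r/2+a*b)/(m*(l*z+b))" using assms(1,2) nz by simp
  also have "\<dots> = (m*Z + a)/m" unfolding e[symmetric] using nz by simp
  finally show "((r/2+a*b)/(l*m))/(z - (-b/l)) + (-a/m) = Z" using assms(2) by (simp add: field_simps)
qed

lemma inversion_bond_has_inversion:
  assumes bond: "is_bond n p P d \<beta>" and "inversion_point \<beta>" and LR: "inv_LR \<beta> L R v w"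
  shows "has_inversion L R n (\<lambda>i. proj L (p i)) (\<lambda>i. proj R (P i))"
proof -
  obtain a b where a: "px \<beta> = a *s w" and b: "py \<beta> = b *s v" and rab: "pr \<beta> + 2*a*b \<noteq> 0"
    using inversion_point_coords[OF assms(2,3)] .
  have "v \<noteq> 0" "isotropic v" "w \<noteq> 0" "isotropic w" and M: "pM \<beta> = outer (1 *s v) w"
    and "L = Smap w" "R = Smap v" using LR unfolding inv_LR_def by auto
  then obtain l u1 u2 m U1 U2 where l: "l \<noteq> 0" "adapted_basis L u1 u2" "w = l *s iso_vec u1 u2"
    and m: "m \<noteq> 0" "adapted_basis R U1 U2" "v = m *s iso_vec U1 U2"
    using isotropic_eq_smult_adapted by metis
  show ?thesis unfolding has_inversion_def
  proof (intro exI conjI allI impI)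
    show "adapted_basis L u1 u2" "adapted_basis R U1 U2" by fact+
    show "(pr \<beta>/2 + a*b)/(l*m) \<noteq> 0" using rab l(1) m(1) by (simp add: field_simps)
    fix i assume "i < n"
    define z where "z = plane_coord u1 u2 (proj L (p i))"
    define Z where "Z = plane_coord U1 U2 (proj R (P i))"
    have "lform (p i) (P i) (d i) \<beta> = 0" using is_bond_at_infinity(3)[OF bond \<open>i < n\<close>] .
    hence "pr \<beta> - 2*a*(l*z) - 2*b*(m*Z) - 2*(l*z)*(m*Z) = 0"
      unfolding lform_at_infinity[OF is_bond_at_infinity(2)[OF bond] M a b] z_def Z_def l(3) m(3)
      by (simp add: cbil_scale_right cbil_iso_vec_plane_coord[OF l(2)] cbil_iso_vec_plane_coord[OF m(2)]
          algebra_simps)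
    from moebius_of_leg_equation[OF l(1) m(1) rab this]
    show "plane_coord u1 u2 (proj L (p i)) \<noteq> -b/l"
      "(pr \<beta>/2 + a*b)/(l*m) / (plane_coord u1 u2 (proj L (p i)) - -b/l) + -a/m
        = plane_coord U1 U2 (proj R (P i))"
      unfolding z_def Z_def by simp_all
  qed
qed

lemma similarity_bond_has_similarity:
  assumes bond: "is_bond n p P d \<beta>" and "similarity_point \<beta>"
  shows "has_similarity (sim_L \<beta>) (sim_R \<beta>) n (\<lambda>i. proj (sim_L \<beta>) (p i)) (\<lambda>i. proj (sim_R \<beta>) (P i))"
proof -
  note X = is_bond_at_infinity(1)[OF bond] and h0 = is_bond_at_infinity(2)[OF bond]
  have M0: "pM \<beta> = 0" and "px \<beta> \<noteq> 0" "py \<beta> \<noteq> 0"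
    using assms(2) unfolding similarity_point_def by auto
  moreover have "isotropic (px \<beta>)" "isotropic (py \<beta>)"
    using X_cone_xx_hr[OF X] X_cone_yy_hr[OF X] h0 by (simp_all add: isotropic_def)
  ultimately obtain l u1 u2 m U1 U2
    where l: "l \<noteq> 0" "adapted_basis (sim_L \<beta>) u1 u2" "px \<beta> = l *s iso_vec u1 u2"
      and m: "m \<noteq> 0" "adapted_basis (sim_R \<beta>) U1 U2" "py \<beta> = m *s iso_vec U1 U2"
    unfolding sim_L_def sim_R_def using isotropic_eq_smult_adapted by metis
  have M: "pM \<beta> = outer (0 *s iso_vec U1 U2) (iso_vec u1 u2)" using M0 by (simp add: outer_eq_0_iff)
  show ?thesis unfolding has_similarity_def
  proof (intro exI conjI allI impI)
    show "adapted_basis (sim_L \<beta>) u1 u2" "adapted_basis (sim_R \<beta>) U1 U2" by fact+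
    show "- l / m \<noteq> 0" using l(1) m(1) by simp
    fix i assume "i < n"
    have "lform (p i) (P i) (d i) \<beta> = 0" using is_bond_at_infinity(3)[OF bond \<open>i < n\<close>] .
    hence "pr \<beta> - 2*l*plane_coord u1 u2 (proj (sim_L \<beta>) (p i))
        - 2*m*plane_coord U1 U2 (proj (sim_R \<beta>) (P i)) = 0"
      unfolding lform_at_infinity[OF h0 M l(3) m(3)] by (simp add: cbil_iso_vec_plane_coord[OF l(2)] cbil_iso_vec_plane_coord[OF m(2)])
    thus "- l / m * plane_coord u1 u2 (proj (sim_L \<beta>) (p i)) + pr \<beta> / (2*m)
        = plane_coord U1 U2 (proj (sim_R \<beta>) (P i))"
      using m(1) by (simp add: field_simps)
  qed
qed

lemma has_inversion_inversion_bond: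
  assumes "has_inversion L R n (\<lambda>i. proj L (p i)) (\<lambda>i. proj R (P i))"
  shows "\<exists>\<beta> v w. is_bond n p P d \<beta> \<and> inversion_point \<beta> \<and> inv_LR \<beta> L R v w"
proof -
  obtain u1 u2 U1 U2 \<alpha> z0 w0' where L: "adapted_basis L u1 u2" and R: "adapted_basis R U1 U2"
    and "\<alpha> \<noteq> 0" and moeb: "\<forall>i<n. plane_coord u1 u2 (proj L (p i)) \<noteq> z0 \<and>
      \<alpha> / (plane_coord u1 u2 (proj L (p i)) - z0) + w0' = plane_coord U1 U2 (proj R (P i))"
    using assms unfolding has_inversion_def by blast
  define W where "W = iso_vec u1 u2"
  define V where "V = iso_vec U1 U2"
  define \<beta> where "\<beta> = ((0::complex), outer V W, (-w0') *s W, (-z0) *s V, 2*\<alpha> + 2*(-z0)*w0')"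
  note W = adapted_basis_iso_vec[OF L, folded W_def] and V = adapted_basis_iso_vec[OF R, folded V_def]
  have h0: "ph \<beta> = 0" and M: "pM \<beta> = outer (1 *s V) W"
    and x: "px \<beta> = (-w0') *s W" and y: "py \<beta> = (-z0) *s V"
    by (simp_all add: \<beta>_def ph_def pM_def px_def py_def)
  have MV: "pM \<beta> \<noteq> 0" using W(1) V(1) by (simp add: M outer_eq_0_iff)
  have X: "\<beta> \<in> X_cone"
    unfolding \<beta>_def V_def W_def
    by (rule X_cone_inversion_point[OF adapted_basis_orthonormal_pair(1)[OF L]
          adapted_basis_orthonormal_pair(1)[OF R]])
  have "lform (p i) (P i) (d i) \<beta> = 0" if "i < n" for i
  proof -
    define z where "z = plane_coord u1 u2 (proj L (p i))"
    define Z where "Z = plane_coord U1 U2 (proj R (P i))"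
    have "z \<noteq> z0" "\<alpha> / (z - z0) + w0' = Z" using moeb that z_def Z_def by auto
    hence "(Z - w0') * (z - z0) = \<alpha>" by (simp add: field_simps)
    moreover have "lform (p i) (P i) (d i) \<beta> = 2*(\<alpha> - (Z - w0') * (z - z0))"
      unfolding lform_at_infinity[OF h0 M x y] cbil_iso_vec_plane_coord[OF L, folded W_def]
        cbil_iso_vec_plane_coord[OF R, folded V_def]
      by (simp add: \<beta>_def pr_def z_def[symmetric] Z_def[symmetric] algebra_simps)
    ultimately show ?thesis by simp
  qed
  hence bond: "is_bond n p P d \<beta>"
    using X h0 MV unfolding is_bond_def in_boundary_def inX_def by (auto simp: zero_prod_def pM_def)
  have "Nmat \<beta> = (\<chi> i j. (2*\<alpha>) * outer V W $ i $ j)"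
    by (simp add: \<beta>_def Nmat_def pr_def px_def py_def pM_def outer_def vec_eq_iff algebra_simps)
  hence "Nmat \<beta> \<noteq> 0" using MV \<open>\<alpha> \<noteq> 0\<close> by (auto simp: M vec_eq_iff)
  hence "inversion_point \<beta>" using bond MV unfolding inversion_point_def is_bond_def by simp
  moreover have "inv_LR \<beta> L R V W" using W V by (simp add: inv_LR_def M)
  ultimately show ?thesis using bond by blast
qed

lemma has_similarity_similarity_bond:
  assumes "has_similarity L R n (\<lambda>i. proj L (p i)) (\<lambda>i. proj R (P i))"
  shows "\<exists>\<beta>. is_bond n p P d \<beta> \<and> similarity_point \<beta> \<and> sim_L \<beta> = L \<and> sim_R \<beta> = R"
proof -
  obtain u1 u2 U1 U2 \<alpha> \<gamma> where L: "adapted_basis L u1 u2" and R: "adapted_basis R U1 U2"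
    and "\<alpha> \<noteq> 0" and sim: "\<forall>i<n. \<alpha> * plane_coord u1 u2 (proj L (p i)) + \<gamma> = plane_coord U1 U2 (proj R (P i))"
    using assms unfolding has_similarity_def by blast
  define W where "W = iso_vec u1 u2"
  define V where "V = iso_vec U1 U2"
  define \<beta> where "\<beta> = ((0::complex), (0::complex^3^3), (-\<alpha>) *s W, 1 *s V, 2*\<gamma>)"
  note W = adapted_basis_iso_vec[OF L, folded W_def] and V = adapted_basis_iso_vec[OF R, folded V_def]
  have h0: "ph \<beta> = 0" and M: "pM \<beta> = outer (0 *s V) W" by (simp_all add: \<beta>_def ph_def pM_def outer_eq_0_iff)
  have x: "px \<beta> = (-\<alpha>) *s W" "px \<beta> \<noteq> 0" and y: "py \<beta> = 1 *s V" "py \<beta> \<noteq> 0"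
    using W(1) V(1) \<open>\<alpha> \<noteq> 0\<close> by (auto simp: \<beta>_def px_def py_def vec_eq_iff)
  have X: "\<beta> \<in> X_cone"
    unfolding \<beta>_def V_def W_def
    by (rule X_cone_similarity_point[OF adapted_basis_orthonormal_pair(1)[OF L]
          adapted_basis_orthonormal_pair(1)[OF R]])
  have "lform (p i) (P i) (d i) \<beta> = 0" if "i < n" for i
  proof -
    have "lform (p i) (P i) (d i) \<beta>
        = 2*(\<alpha> * plane_coord u1 u2 (proj L (p i)) + \<gamma> - plane_coord U1 U2 (proj R (P i)))"
      unfolding lform_at_infinity[OF h0 M x(1) y(1)] cbil_iso_vec_plane_coord[OF L, folded W_def]
        cbil_iso_vec_plane_coord[OF R, folded V_def]
      by (simp add: \<beta>_def pr_def algebra_simps)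
    thus ?thesis using sim that by simp
  qed
  hence bond: "is_bond n p P d \<beta>"
    using X h0 x(2) unfolding is_bond_def in_boundary_def inX_def by (auto simp: zero_prod_def px_def)
  moreover have "similarity_point \<beta>" using bond x y unfolding similarity_point_def is_bond_def
    by (simp add: \<beta>_def pM_def)
  moreover have "sim_L \<beta> = L" "sim_R \<beta> = R"
    using Smap_scale[of "- \<alpha>" W] Smap_scale[of 1 V] \<open>\<alpha> \<noteq> 0\<close> W(3) V(3)
    unfolding sim_L_def sim_R_def x(1) y(1) by simp_all
  ultimately show ?thesis by blast
qed

theorem mainTheorem3:
  fixes n :: nat and p P :: "nat \<Rightarrow> real^3" and d :: "nat \<Rightarrow> real"
  assumes "\<forall>i<n. d i \<ge> 0"
  shows
    "(\<forall>\<beta> v w L R. is_bond n p P d \<beta> \<and> inversion_point \<beta> \<and> inv_LR \<beta> L R v w \<longrightarrow>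
        has_inversion L R n (\<lambda>i. proj L (p i)) (\<lambda>i. proj R (P i)))
   \<and> (\<forall>\<beta>. is_bond n p P d \<beta> \<and> similarity_point \<beta> \<longrightarrow>
        has_similarity (sim_L \<beta>) (sim_R \<beta>) n (\<lambda>i. proj (sim_L \<beta>) (p i)) (\<lambda>i. proj (sim_R \<beta>) (P i)))
   \<and> (\<forall>L R. L \<in> S2 \<and> R \<in> S2 \<and> has_inversion L R n (\<lambda>i. proj L (p i)) (\<lambda>i. proj R (P i)) \<longrightarrow>
        (\<exists>\<beta> v w. is_bond n p P d \<beta> \<and> inversion_point \<beta> \<and> inv_LR \<beta> L R v w))
   \<and> (\<forall>L R. L \<in> S2 \<and> R \<in> S2 \<and> has_similarity L R n (\<lambda>i. proj L (p i)) (\<lambda>i. proj R (P i)) \<longrightarrow>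
        (\<exists>\<beta>. is_bond n p P d \<beta> \<and> similarity_point \<beta> \<and> sim_L \<beta> = L \<and> sim_R \<beta> = R))"
  by (intro conjI allI impI; elim conjE)
    (blast intro: inversion_bond_has_inversion similarity_bond_has_similarity
      has_inversion_inversion_bond has_similarity_similarity_bond)+
end
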